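(* Let $\boldsymbol\mu\subset\mathfrak G^{\mathrm{small}}$ be a ratio set. Assume $\boldsymbol\mu$ witnesses $V\in\mathbb T$, the series $S=\sum_{j\ge1}B_j$ converges $\boldsymbol\mu$-geometrically, and for $j=1,2,3,\dots$, $\boldsymbol\mu$ witnesses $A_j$ and $A_j\sim B_jV$. Then $T=\sum_{j\ge1}A_j$ converges $\boldsymbol\mu$-geometrically and $T\sim SV$.
   Context: $\mathbb T$ is the field of real grid-based transseries over the ordered group $\mathfrak G$ of transmonomials, with $\sim$ the usual asymptotic equivalence ($A\sim B$ iff $A-B\prec A$); $\operatorname{mag}T$ is the dominant monomial of $T\ne0$. A ratio set is a finite $\boldsymbol\mu\subset\mathfrak G^{\mathrm{small}}=\{\mathfrak g\prec1\}$; $\boldsymbol\mu^*$ (resp. $\boldsymbol\mu^+$) is the set of products of zero or more (resp. one or more) elements of $\boldsymbol\mu$. Monomials: $\mathfrak m\prec^{\boldsymbol\mu}\mathfrak n$ iff $\mathfrak m/\mathfrak n\in\boldsymbol\mu^+$; transseries: $A\prec^{\boldsymbol\mu}B$ (also written $B\succ^{\boldsymbol\mu}A$) iff each $\mathfrak a\in\operatorname{supp}A$ is $\prec^{\boldsymbol\mu}$ some $\mathfrak b\in\operatorname{supp}B$. $\boldsymbol\mu$ witnesses nonzero $T$ iff $\operatorname{supp}T\subseteq(\operatorname{mag}T)\boldsymbol\mu^*$. A series $\sum_{j\ge1}A_j$ is $\boldsymbol\mu$-geometrically convergent if $\boldsymbol\mu$ witnesses each $A_j$ and $A_j\succ^{\boldsymbol\mu}A_{j+1}$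 for all $j$; such a series converges (point-finitely) in $\mathbb T$. *)

theory Defs
  imports Complex_Main
begin

text \<open>
  Grid-based series over an ordered abelian group of monomials, written additively:
  the monomial product m n is m + n, the unit monomial 1 is 0, and the asymptotic
  order on monomials (m \<prec> n) is m < n.
\<close>

type_synonym 'g series = "'g \<Rightarrow> real"

definition supp :: "'g series \<Rightarrow> 'g set" where
  "supp T = {m. T m \<noteq> 0}"

definition small :: "'g::linordered_ab_group_add \<Rightarrow> bool" where
  "small g \<longleftrightarrow> g < 0"

definition ratio_set :: "'g::linordered_ab_group_add set \<Rightarrow> bool" where
  "ratio_set \<mu> \<longleftrightarrow> finite \<mu> \<and> (\<forall>g\<in>\<mu>. small g)"

definition ratio_star :: "'g::linordered_ab_group_add set \<Rightarrow> 'g set" where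
  "ratio_star \<mu> = {sum_list xs | xs. set xs \<subseteq> \<mu>}"

definition ratio_plus :: "'g::linordered_ab_group_add set \<Rightarrow> 'g set" where
  "ratio_plus \<mu> = {sum_list xs | xs. xs \<noteq> [] \<and> set xs \<subseteq> \<mu>}"

definition mag :: "('g::linorder) series \<Rightarrow> 'g" where
  "mag T = (GREATEST m. T m \<noteq> 0)"

definition asymp_less :: "('g::linorder) series \<Rightarrow> 'g series \<Rightarrow> bool" where
  "asymp_less A B \<longleftrightarrow> B \<noteq> (\<lambda>_. 0) \<and> (A = (\<lambda>_. 0) \<or> mag A < mag B)"

definition asymp_equiv :: "('g::linorder) series \<Rightarrow> 'g series \<Rightarrow> bool" where
  "asymp_equiv A B \<longleftrightarrow> asymp_less (\<lambda>m. A m - B m) A"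

definition series_mult :: "('g::ab_group_add) series \<Rightarrow> 'g series \<Rightarrow> 'g series" where
  "series_mult A B = (\<lambda>m. \<Sum>a\<in>{a. A a \<noteq> 0 \<and> B (m - a) \<noteq> 0}. A a * B (m - a))"

definition mono_less_mu :: "'g::linordered_ab_group_add set \<Rightarrow> 'g \<Rightarrow> 'g \<Rightarrow> bool" where
  "mono_less_mu \<mu> m n \<longleftrightarrow> m - n \<in> ratio_plus \<mu>"

definition series_less_mu :: "'g::linordered_ab_group_add set \<Rightarrow> 'g series \<Rightarrow> 'g series \<Rightarrow> bool" where
  "series_less_mu \<mu> A B \<longleftrightarrow> (\<forall>a\<in>supp A. \<exists>b\<in>supp B. mono_less_mu \<mu> a b)"

definition witnesses :: "'g::linordered_ab_group_add set \<Rightarrow> 'g series \<Rightarrow> bool" where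
  "witnesses \<mu> T \<longleftrightarrow> T \<noteq> (\<lambda>_. 0) \<and> supp T \<subseteq> {mag T + g | g. g \<in> ratio_star \<mu>}"

text \<open>\<mu>-geometric convergence of the series \<Sum>_j A j (indices start at 0 here).\<close>
definition geom_conv :: "'g::linordered_ab_group_add set \<Rightarrow> (nat \<Rightarrow> 'g series) \<Rightarrow> bool" where
  "geom_conv \<mu> A \<longleftrightarrow> (\<forall>j. witnesses \<mu> (A j)) \<and> (\<forall>j. series_less_mu \<mu> (A (Suc j)) (A j))"

definition series_sum :: "(nat \<Rightarrow> 'g series) \<Rightarrow> 'g series" where
  "series_sum A = (\<lambda>m. \<Sum>j\<in>{j. A j m \<noteq> 0}. A j m)"

end

(*
  The dominant monomial of B_j V is mag B_j + mag V, with the product of the leading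
  coefficients as coefficient, and A_j \<sim> B_j V forces A_j to have the same leading term.
  Hence the ratios mag A_(j+1) / mag A_j are those of the B_j, so \<Sum> A_j converges
  \<mu>-geometrically. Both \<Sum> A_j and (\<Sum> B_j) V are supported in (mag A_0) \<mu>\<^sup>* and
  share the leading term of A_0, so their difference lies strictly below mag A_0.
  Dominant monomials exist at all because, \<mu> being a finite set of small monomials,
  every nonempty subset of a shifted \<mu>\<^sup>* (or of a union of two of them) has a
  greatest element.
*)
theory Submission
  imports Defs "HOL-Library.Multiset" "HOL-Library.Ramsey"
begin

definition ratio_cone :: "'g::linordered_ab_group_add set \<Rightarrow> 'g \<Rightarrow> 'g set" where
  "ratio_cone \<mu> c = {x. x - c \<in> ratio_star \<mu>}"

lemma ratio_star_add: "x \<in> ratio_star \<mu> \<Longrightarrow> y \<in> ratio_star \<mu> \<Longrightarrow> x + y \<in> ratio_star \<mu>"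
  unfolding ratio_star_def
proof clarify
  fix xs ys assume "set xs \<subseteq> \<mu>" "set ys \<subseteq> \<mu>"
  then show "\<exists>zs. sum_list xs + sum_list ys = sum_list zs \<and> set zs \<subseteq> \<mu>"
    by (intro exI[where x = "xs @ ys"]) auto
qed

lemma ratio_plus_add: "x \<in> ratio_plus \<mu> \<Longrightarrow> y \<in> ratio_star \<mu> \<Longrightarrow> x + y \<in> ratio_plus \<mu>"
  unfolding ratio_star_def ratio_plus_def
proof clarify
  fix xs ys assume "xs \<noteq> []" "set xs \<subseteq> \<mu>" "set ys \<subseteq> \<mu>"
  then show "\<exists>zs. sum_list xs + sum_list ys = sum_list zs \<and> zs \<noteq> [] \<and> set zs \<subseteq> \<mu>"
    by (intro exI[where x = "xs @ ys"]) auto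
qed

lemma ratio_plus_imp_ratio_star: "x \<in> ratio_plus \<mu> \<Longrightarrow> x \<in> ratio_star \<mu>"
  unfolding ratio_plus_def ratio_star_def by auto

lemma ratio_plus_neg: "ratio_set \<mu> \<Longrightarrow> x \<in> ratio_plus \<mu> \<Longrightarrow> x < 0"
proof -
  have "xs \<noteq> [] \<Longrightarrow> \<forall>g\<in>set xs. g < 0 \<Longrightarrow> sum_list xs < (0::'g::linordered_ab_group_add)" for xs
    by (induction xs) (auto intro: add_neg_nonpos sum_list_nonpos less_imp_le)
  then show "ratio_set \<mu> \<Longrightarrow> x \<in> ratio_plus \<mu> \<Longrightarrow> x < 0"
    unfolding ratio_set_def ratio_plus_def small_def by blast
qed

lemma ratio_star_nonpos: "ratio_set \<mu> \<Longrightarrow> x \<in> ratio_star \<mu> \<Longrightarrow> x \<le> 0"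
  unfolding ratio_set_def ratio_star_def small_def
  by (auto intro!: sum_list_nonpos) (meson less_imp_le subsetD)

lemma ratio_cone_refl: "c \<in> ratio_cone \<mu> c"
  unfolding ratio_cone_def ratio_star_def by (auto intro!: exI[where x = "[]"])

lemma ratio_cone_trans: "x \<in> ratio_cone \<mu> y \<Longrightarrow> y \<in> ratio_cone \<mu> z \<Longrightarrow> x \<in> ratio_cone \<mu> z"
  unfolding ratio_cone_def using ratio_star_add by fastforce

lemma ratio_cone_add: "x \<in> ratio_cone \<mu> a \<Longrightarrow> y \<in> ratio_cone \<mu> b \<Longrightarrow> x + y \<in> ratio_cone \<mu> (a + b)"
  unfolding ratio_cone_def using ratio_star_add by (fastforce simp: algebra_simps)

lemma ratio_cone_le: "ratio_set \<mu> \<Longrightarrow> x \<in> ratio_cone \<mu> c \<Longrightarrow> x \<le> c"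
  unfolding ratio_cone_def using ratio_star_nonpos by fastforce

lemma ratio_plus_diff_trans:
  "x - y \<in> ratio_plus \<mu> \<Longrightarrow> y \<in> ratio_cone \<mu> z \<Longrightarrow> x - z \<in> ratio_plus \<mu>"
  unfolding ratio_cone_def using ratio_plus_add by fastforce

lemma ratio_cone_plus_diff_trans:
  "x \<in> ratio_cone \<mu> y \<Longrightarrow> y - z \<in> ratio_plus \<mu> \<Longrightarrow> x - z \<in> ratio_plus \<mu>"
  unfolding ratio_cone_def using ratio_plus_add by (fastforce simp: add.commute)

lemma sum_list_le_if_mset_subseteq:
  fixes xs ys :: "'a::ordered_comm_monoid_add list"
  assumes "mset xs \<subseteq># mset ys" and "\<forall>g\<in>set ys. g \<le> 0"
  shows "sum_list ys \<le> sum_list xs"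
proof -
  obtain zs where zs: "mset zs = mset ys - mset xs"
    using ex_mset by blast
  have "sum_list ys = sum_list xs + sum_list zs"
    using assms(1) zs by (metis subset_mset.add_diff_inverse sum_mset.union sum_mset_sum_list)
  moreover have "sum_list zs \<le> 0"
    using assms(2) zs by (intro sum_list_nonpos) (metis in_diffD set_mset_mset)
  ultimately show ?thesis
    by (simp add: add_decreasing2)
qed

lemma wfp_on_ratio_star:
  assumes "ratio_set \<mu>"
  shows "wfp_on (ratio_star \<mu>) (>)"
proof -
  txt \<open>Along a chain in which the sums increase, each step must lose some generator
    (otherwise the multiset grows and the sum, made of negative terms, decreases). Such a
    transitive relation is contained in finitely many well-founded ones, so by the
    Podelski--Rybalchenko theorem it has no infinite chain: this replaces Dickson's lemma.\<close>
  define r where "r = {(ys, xs). set xs \<subseteq> \<mu> \<and> set ys \<subseteq> \<mu> \<and> sum_list xs < sum_list ys}"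
  obtain gs where gs: "set gs = \<mu>"
    using assms finite_list unfolding ratio_set_def by blast
  define T where "T i = inv_image less_than (\<lambda>xs. count_list xs (gs ! i))" for i
  have "r \<subseteq> (\<Union>i<length gs. T i)"
  proof clarify
    fix ys xs assume "(ys, xs) \<in> r"
    then have sub: "set xs \<subseteq> \<mu>" "set ys \<subseteq> \<mu>" and lt: "sum_list xs < sum_list ys"
      by (auto simp: r_def)
    have "\<exists>g\<in>\<mu>. count_list ys g < count_list xs g"
    proof (rule ccontr)
      assume "\<not> ?thesis"
      then have "mset xs \<subseteq># mset ys"
        using sub by (auto simp: subseteq_mset_def count_mset not_less) (metis count_list_0_iff le0 subsetD)
      moreover have "\<forall>g\<in>set ys. g \<le> 0"
        using sub assms by (force simp: ratio_set_def small_def)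
      ultimately show False
        using lt sum_list_le_if_mset_subseteq by (metis not_less)
    qed
    then show "(ys, xs) \<in> (\<Union>i<length gs. T i)"
      by (auto simp: T_def in_set_conv_nth gs[symmetric])
  qed
  moreover have "trans r"
    by (auto simp: r_def trans_def)
  moreover have "wf (T i)" for i
    by (simp add: T_def)
  ultimately have "wf r"
    by (metis disj_wf trans_disj_wf_implies_wf)
  then have "wfp_on UNIV (\<lambda>ys xs. (ys, xs) \<in> r)"
    by (simp add: wfp_on_wf_on_eq)
  then have "wfp_on {xs. set xs \<subseteq> \<mu>} (\<lambda>ys xs. sum_list ys > sum_list xs)"
    by (rule wfp_on_mono_strong) (auto simp: r_def)
  moreover have "ratio_star \<mu> = sum_list ` {xs. set xs \<subseteq> \<mu>}"
    by (auto simp: ratio_star_def)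
  ultimately show ?thesis
    by (simp add: wfp_on_image)
qed

lemma wfp_on_ratio_cone: "ratio_set \<mu> \<Longrightarrow> wfp_on (ratio_cone \<mu> c) (>)"
proof -
  have "ratio_cone \<mu> c = (+) c ` ratio_star \<mu>"
    unfolding ratio_cone_def by (force simp: image_iff)
  then show "ratio_set \<mu> \<Longrightarrow> wfp_on (ratio_cone \<mu> c) (>)"
    by (simp add: wfp_on_image wfp_on_ratio_star)
qed

lemma wfp_on_greater_imp_greatest:
  fixes C :: "'a::linorder set"
  assumes "wfp_on C (>)" and "Y \<subseteq> C" and "Y \<noteq> {}"
  shows "\<exists>g\<in>Y. \<forall>y\<in>Y. y \<le> g"
proof -
  obtain g where "g \<in> Y" "\<forall>y. g < y \<longrightarrow> y \<notin> Y"
    using assms wfp_on_iff_ex_minimal[of C "(>)"] by blast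
  then show ?thesis
    using not_le by blast
qed

lemma wfp_on_Un_greater:
  fixes A B :: "'a::linorder set"
  assumes "wfp_on A (>)" and "wfp_on B (>)"
  shows "wfp_on (A \<union> B) (>)"
  unfolding wfp_on_iff_ex_minimal
proof clarify
  fix X assume X: "X \<subseteq> A \<union> B" "X \<noteq> {}"
  consider "X \<inter> A = {}" | "X \<inter> B = {}" | "X \<inter> A \<noteq> {}" "X \<inter> B \<noteq> {}"
    by blast
  then have "\<exists>g\<in>X. \<forall>y\<in>X. y \<le> g"
  proof cases
    case 1
    then show ?thesis
      using X wfp_on_greater_imp_greatest[OF assms(2), of X] by blast
  next
    case 2
    then show ?thesis
      using X wfp_on_greater_imp_greatest[OF assms(1), of X] by blast
  next
    case 3
    then obtain a b where a: "a \<in> X" "\<forall>y\<in>X \<inter> A. y \<le> a" and b: "b \<in> X" "\<forall>y\<in>X \<inter> B. y \<le> b"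
      using wfp_on_greater_imp_greatest[OF assms(1), of "X \<inter> A"]
        wfp_on_greater_imp_greatest[OF assms(2), of "X \<inter> B"] by blast
    then show ?thesis
    proof (intro bexI ballI)
      fix y assume "y \<in> X"
      then show "y \<le> max a b"
        using X(1) a b by (auto simp: le_max_iff_disj)
    qed (simp add: max_def a(1) b(1))
  qed
  then show "\<exists>z\<in>X. \<forall>y. z < y \<longrightarrow> y \<notin> X"
    using not_le by blast
qed

lemma mag_eqI: "T g \<noteq> 0 \<Longrightarrow> (\<And>x. T x \<noteq> 0 \<Longrightarrow> x \<le> g) \<Longrightarrow> mag T = g"
  unfolding mag_def by (rule Greatest_equality)

lemma mag_greatest:
  fixes T :: "'g::linorder series"
  assumes "wfp_on (supp T) (>)" and "T \<noteq> (\<lambda>_. 0)"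
  shows "T (mag T) \<noteq> 0" and "T x \<noteq> 0 \<Longrightarrow> x \<le> mag T"
proof -
  have "supp T \<noteq> {}"
    using assms(2) by (auto simp: supp_def)
  then obtain g where g: "T g \<noteq> 0" "\<And>x. T x \<noteq> 0 \<Longrightarrow> x \<le> g"
    using wfp_on_greater_imp_greatest[OF assms(1) subset_refl] by (auto simp: supp_def)
  then have "mag T = g"
    by (rule mag_eqI)
  with g show "T (mag T) \<noteq> 0" and "T x \<noteq> 0 \<Longrightarrow> x \<le> mag T"
    by auto
qed

lemma witnesses_iff: "witnesses \<mu> T \<longleftrightarrow> T \<noteq> (\<lambda>_. 0) \<and> supp T \<subseteq> ratio_cone \<mu> (mag T)"
  unfolding witnesses_def ratio_cone_def by (force simp: algebra_simps)

lemma witnesses_supp: "witnesses \<mu> T \<Longrightarrow> supp T \<subseteq> ratio_cone \<mu> (mag T)"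
  by (simp add: witnesses_iff)

lemma witnesses_mag:
  assumes "ratio_set \<mu>" and "witnesses \<mu> T"
  shows "T (mag T) \<noteq> 0"
  using assms by (meson mag_greatest(1) witnesses_iff wfp_on_ratio_cone wfp_on_subset)

lemma wfp_on_supp_diff_ratio_cone:
  assumes "ratio_set \<mu>" and "supp T \<subseteq> ratio_cone \<mu> a" and "supp P \<subseteq> ratio_cone \<mu> b"
  shows "wfp_on (supp (\<lambda>m. T m - P m)) (>)"
proof (rule wfp_on_subset)
  show "wfp_on (ratio_cone \<mu> a \<union> ratio_cone \<mu> b) (>)"
    using assms(1) by (intro wfp_on_Un_greater wfp_on_ratio_cone)
  have "supp (\<lambda>m. T m - P m) \<subseteq> supp T \<union> supp P"
    by (auto simp: supp_def)
  then show "supp (\<lambda>m. T m - P m) \<subseteq> ratio_cone \<mu> a \<union> ratio_cone \<mu> b"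
    using assms(2,3) by blast
qed

lemma asymp_equiv_imp_mag_eq:
  fixes A P :: "'g::linorder series"
  assumes equiv: "asymp_equiv A P"
    and wfA: "wfp_on (supp A) (>)" and wfD: "wfp_on (supp (\<lambda>m. A m - P m)) (>)"
  shows "mag P = mag A" and "P (mag A) = A (mag A)"
proof -
  define D where "D = (\<lambda>m. A m - P m)"
  have "A \<noteq> (\<lambda>_. 0)" and D_small: "D = (\<lambda>_. 0) \<or> mag D < mag A"
    using equiv by (auto simp: asymp_equiv_def asymp_less_def D_def)
  have D_top: "D x = 0" if "mag A \<le> x" for x
  proof (rule ccontr)
    assume "D x \<noteq> 0"
    then have "D \<noteq> (\<lambda>_. 0)" by auto
    then show False
      using mag_greatest(2)[OF wfD[folded D_def] _ \<open>D x \<noteq> 0\<close>] D_small that by auto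
  qed
  show "P (mag A) = A (mag A)"
    using D_top[of "mag A"] by (simp add: D_def)
  moreover have "x \<le> mag A" if "P x \<noteq> 0" for x
  proof (rule ccontr)
    assume "\<not> x \<le> mag A"
    then have "A x = 0" and "D x = 0"
      using mag_greatest(2)[OF wfA \<open>A \<noteq> (\<lambda>_. 0)\<close>, of x] D_top[of x] by auto
    with that show False by (simp add: D_def)
  qed
  ultimately show "mag P = mag A"
    using mag_greatest(1)[OF wfA \<open>A \<noteq> (\<lambda>_. 0)\<close>] by (intro mag_eqI) auto
qed

lemma asymp_equivI:
  fixes T P :: "'g::linorder series"
  assumes "T p \<noteq> 0" and "P p = T p"
    and "\<And>x. T x \<noteq> 0 \<or> P x \<noteq> 0 \<Longrightarrow> x \<le> p"
    and wfD: "wfp_on (supp (\<lambda>m. T m - P m)) (>)"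
  shows "asymp_equiv T P"
proof -
  define D where "D = (\<lambda>m. T m - P m)"
  have mag_T: "mag T = p"
    using assms(1,3) by (intro mag_eqI) auto
  have "mag D < p" if "D \<noteq> (\<lambda>_. 0)"
  proof -
    have "D (mag D) \<noteq> 0"
      using mag_greatest(1)[OF wfD[folded D_def] that] .
    then have "mag D \<le> p" and "mag D \<noteq> p"
      using assms(2,3) by (auto simp: D_def)
    then show ?thesis by simp
  qed
  then show ?thesis
    using assms(1) mag_T unfolding asymp_equiv_def asymp_less_def D_def by fastforce
qed

lemma asymp_equiv_ratio_coneI:
  assumes "ratio_set \<mu>" and "supp T \<subseteq> ratio_cone \<mu> p" and "supp P \<subseteq> ratio_cone \<mu> p"
    and "T p \<noteq> 0" and "P p = T p"
  shows "asymp_equiv T P"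
proof (rule asymp_equivI)
  show "x \<le> p" if "T x \<noteq> 0 \<or> P x \<noteq> 0" for x
    using that assms(2,3) ratio_cone_le[OF assms(1)] by (auto simp: supp_def)
  show "wfp_on (supp (\<lambda>m. T m - P m)) (>)"
    using assms(1-3) by (rule wfp_on_supp_diff_ratio_cone)
qed (use assms in auto)

lemma supp_series_mult: "supp (series_mult A B) \<subseteq> {x + y | x y. x \<in> supp A \<and> y \<in> supp B}"
proof
  fix m assume "m \<in> supp (series_mult A B)"
  moreover have "series_mult A B m = 0" if "{x. A x \<noteq> 0 \<and> B (m - x) \<noteq> 0} = {}"
    unfolding series_mult_def that by (rule sum.empty)
  ultimately have "{x. A x \<noteq> 0 \<and> B (m - x) \<noteq> 0} \<noteq> {}"
    by (auto simp: supp_def)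
  then obtain x where "x \<in> supp A" and "m - x \<in> supp B"
    by (auto simp: supp_def)
  then show "m \<in> {x + y | x y. x \<in> supp A \<and> y \<in> supp B}"
    by force
qed

lemma series_mult_at_bounds:
  fixes A B :: "'g::linordered_ab_group_add series"
  assumes "\<And>x. A x \<noteq> 0 \<Longrightarrow> x \<le> a" and "\<And>y. B y \<noteq> 0 \<Longrightarrow> y \<le> b"
  shows "series_mult A B (a + b) = A a * B b"
proof -
  have "x = a" if "A x \<noteq> 0" "B (a + b - x) \<noteq> 0" for x
    using assms(1)[OF that(1)] assms(2)[OF that(2)] by (simp add: algebra_simps)
  then have "A x \<noteq> 0 \<and> B (a + b - x) \<noteq> 0 \<longleftrightarrow> x = a \<and> A a \<noteq> 0 \<and> B b \<noteq> 0" for x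
    by (metis add_diff_cancel_left')
  then have "{x. A x \<noteq> 0 \<and> B (a + b - x) \<noteq> 0} = (if A a \<noteq> 0 \<and> B b \<noteq> 0 then {a} else {})"
    by auto
  then show ?thesis
    unfolding series_mult_def by simp
qed

lemma supp_series_mult_ratio_cone:
  assumes "supp A \<subseteq> ratio_cone \<mu> a" and "supp B \<subseteq> ratio_cone \<mu> b"
  shows "supp (series_mult A B) \<subseteq> ratio_cone \<mu> (a + b)"
proof
  fix m assume "m \<in> supp (series_mult A B)"
  then obtain x y where "m = x + y" and "x \<in> supp A" and "y \<in> supp B"
    using supp_series_mult by blast
  then show "m \<in> ratio_cone \<mu> (a + b)"
    using assms ratio_cone_add by blast
qed

lemma series_mult_at_ratio_cone:
  assumes "ratio_set \<mu>" and "supp A \<subseteq> ratio_cone \<mu> a" and "supp B \<subseteq> ratio_cone \<mu> b"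
  shows "series_mult A B (a + b) = A a * B b"
  using assms ratio_cone_le[OF assms(1)] by (intro series_mult_at_bounds) (auto simp: supp_def)

lemma supp_series_sum: "supp (series_sum A) \<subseteq> (\<Union>j. supp (A j))"
proof
  fix m assume "m \<in> supp (series_sum A)"
  moreover have "series_sum A m = 0" if "{j. A j m \<noteq> 0} = {}"
    unfolding series_sum_def that by (rule sum.empty)
  ultimately have "{j. A j m \<noteq> 0} \<noteq> {}"
    by (auto simp: supp_def)
  then show "m \<in> (\<Union>j. supp (A j))"
    by (auto simp: supp_def)
qed

lemma series_sum_eq_first:
  assumes "\<And>j. j > 0 \<Longrightarrow> A j m = 0"
  shows "series_sum A m = A 0 m"
proof -
  have "{j. A j m \<noteq> 0} \<subseteq> {0}"
    using assms by (auto intro: gr0I)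
  then have "series_sum A m = (\<Sum>j\<in>{0}. A j m)"
    unfolding series_sum_def by (intro sum.mono_neutral_left) auto
  then show ?thesis
    by simp
qed

lemma series_less_mu_iff_mag:
  assumes "ratio_set \<mu>" and "witnesses \<mu> X" and "witnesses \<mu> Y"
  shows "series_less_mu \<mu> X Y \<longleftrightarrow> mag X - mag Y \<in> ratio_plus \<mu>"
proof
  assume "series_less_mu \<mu> X Y"
  moreover have "mag X \<in> supp X"
    using witnesses_mag[OF assms(1,2)] by (simp add: supp_def)
  ultimately obtain y where "y \<in> supp Y" and "mag X - y \<in> ratio_plus \<mu>"
    unfolding series_less_mu_def mono_less_mu_def by blast
  moreover have "y \<in> ratio_cone \<mu> (mag Y)"
    using \<open>y \<in> supp Y\<close> witnesses_supp[OF assms(3)] by blast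
  ultimately show "mag X - mag Y \<in> ratio_plus \<mu>"
    using ratio_plus_diff_trans by blast
next
  assume mag_less: "mag X - mag Y \<in> ratio_plus \<mu>"
  have "mag Y \<in> supp Y"
    using witnesses_mag[OF assms(1,3)] by (simp add: supp_def)
  moreover have "x - mag Y \<in> ratio_plus \<mu>" if "x \<in> supp X" for x
  proof -
    have "x \<in> ratio_cone \<mu> (mag X)"
      using that witnesses_supp[OF assms(2)] by blast
    then show ?thesis
      using mag_less by (rule ratio_cone_plus_diff_trans)
  qed
  ultimately show "series_less_mu \<mu> X Y"
    unfolding series_less_mu_def mono_less_mu_def by blast
qed

lemma geom_conv_iff_mag:
  assumes "ratio_set \<mu>" and "\<And>j. witnesses \<mu> (A j)"
  shows "geom_conv \<mu> A \<longleftrightarrow> (\<forall>j. mag (A (Suc j)) - mag (A j) \<in> ratio_plus \<mu>)"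
  by (simp add: geom_conv_def series_less_mu_iff_mag assms)

lemma geom_conv_mag_less_mu:
  assumes "ratio_set \<mu>" and "geom_conv \<mu> A" and "i < j"
  shows "mag (A j) - mag (A i) \<in> ratio_plus \<mu>"
  using assms(3)
proof (induction i j rule: less_Suc_induct)
  case (1 i)
  have "\<And>j. witnesses \<mu> (A j)"
    using assms(2) by (simp add: geom_conv_def)
  then show ?case
    using assms(2) geom_conv_iff_mag[OF assms(1)] by blast
next
  case (2 i j k)
  have "mag (A j) \<in> ratio_cone \<mu> (mag (A i))"
    using "2.IH"(1) by (simp add: ratio_cone_def ratio_plus_imp_ratio_star)
  with "2.IH"(2) show ?case
    by (rule ratio_plus_diff_trans)
qed

lemma geom_conv_series_sum:
  assumes "ratio_set \<mu>" and "geom_conv \<mu> A"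
  shows "supp (series_sum A) \<subseteq> ratio_cone \<mu> (mag (A 0))"
    and "series_sum A (mag (A 0)) = A 0 (mag (A 0))"
proof -
  have mag_cone: "mag (A j) \<in> ratio_cone \<mu> (mag (A 0))" for j
  proof (cases j)
    case 0
    then show ?thesis by (simp add: ratio_cone_refl)
  next
    case (Suc k)
    then have "mag (A j) - mag (A 0) \<in> ratio_plus \<mu>"
      using geom_conv_mag_less_mu[OF assms, of 0 j] by simp
    then show ?thesis
      by (simp add: ratio_cone_def ratio_plus_imp_ratio_star)
  qed
  have supp_A: "supp (A j) \<subseteq> ratio_cone \<mu> (mag (A j))" for j
    using assms(2) witnesses_supp unfolding geom_conv_def by blast
  show "supp (series_sum A) \<subseteq> ratio_cone \<mu> (mag (A 0))"
  proof
    fix m assume "m \<in> supp (series_sum A)"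
    then have "m \<in> (\<Union>j. supp (A j))"
      using supp_series_sum[of A] by blast
    then obtain j where "m \<in> supp (A j)"
      by blast
    then show "m \<in> ratio_cone \<mu> (mag (A 0))"
      using supp_A[of j] mag_cone[of j] by (blast intro: ratio_cone_trans)
  qed
  have "A j (mag (A 0)) = 0" if "j > 0" for j
  proof (rule ccontr)
    assume "A j (mag (A 0)) \<noteq> 0"
    then have "mag (A 0) \<in> supp (A j)"
      by (simp add: supp_def)
    then have "mag (A 0) \<in> ratio_cone \<mu> (mag (A j))"
      using supp_A[of j] by blast
    then have "mag (A 0) \<le> mag (A j)"
      by (rule ratio_cone_le[OF assms(1)])
    moreover have "mag (A j) < mag (A 0)"
      using ratio_plus_neg[OF assms(1) geom_conv_mag_less_mu[OF assms that]] by simp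
    ultimately show False by simp
  qed
  then show "series_sum A (mag (A 0)) = A 0 (mag (A 0))"
    by (rule series_sum_eq_first)
qed

lemma asymp_equiv_series_mult_mag:
  assumes "ratio_set \<mu>" and "witnesses \<mu> A" and "witnesses \<mu> B" and "witnesses \<mu> V"
    and equiv: "asymp_equiv A (series_mult B V)"
  shows "mag A = mag B + mag V" and "A (mag A) = B (mag B) * V (mag V)"
proof -
  define P where "P = series_mult B V"
  note supp_A = witnesses_supp[OF assms(2)]
  have supp_P: "supp P \<subseteq> ratio_cone \<mu> (mag B + mag V)"
    unfolding P_def using witnesses_supp[OF assms(3)] witnesses_supp[OF assms(4)]
    by (rule supp_series_mult_ratio_cone)
  have P_top: "P (mag B + mag V) = B (mag B) * V (mag V)"
    unfolding P_def using assms(1) witnesses_supp[OF assms(3)] witnesses_supp[OF assms(4)]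
    by (rule series_mult_at_ratio_cone)
  have "mag P = mag B + mag V"
  proof (rule mag_eqI)
    show "P (mag B + mag V) \<noteq> 0"
      using P_top witnesses_mag[OF assms(1,3)] witnesses_mag[OF assms(1,4)] by simp
    show "x \<le> mag B + mag V" if "P x \<noteq> 0" for x
      using that supp_P ratio_cone_le[OF assms(1)] by (auto simp: supp_def)
  qed
  moreover have "mag P = mag A" and "P (mag A) = A (mag A)"
    using asymp_equiv_imp_mag_eq[OF equiv[folded P_def]] supp_A supp_P
      wfp_on_subset[OF wfp_on_ratio_cone[OF assms(1)]] wfp_on_supp_diff_ratio_cone[OF assms(1) supp_A supp_P]
    by auto
  ultimately show "mag A = mag B + mag V" and "A (mag A) = B (mag B) * V (mag V)"
    using P_top by auto
qed

theorem lemma3p21: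
  fixes \<mu> :: "'g::linordered_ab_group_add set"
    and V :: "'g series" and A B :: "nat \<Rightarrow> 'g series"
  assumes "ratio_set \<mu>"
    and "witnesses \<mu> V"
    and "geom_conv \<mu> B"
    and "\<And>j. witnesses \<mu> (A j)"
    and "\<And>j. asymp_equiv (A j) (series_mult (B j) V)"
  shows "geom_conv \<mu> A \<and> asymp_equiv (series_sum A) (series_mult (series_sum B) V)"
proof
  have wB: "witnesses \<mu> (B j)" for j
    using assms(3) by (simp add: geom_conv_def)
  note lead = asymp_equiv_series_mult_mag[OF assms(1) assms(4) wB assms(2) assms(5)]
  show geom_A: "geom_conv \<mu> A"
    using assms(3)
    by (simp add: geom_conv_iff_mag[OF assms(1) assms(4)] geom_conv_iff_mag[OF assms(1) wB] lead(1))
  let ?p = "mag (B 0) + mag V"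
  note supp_V = witnesses_supp[OF assms(2)]
  show "asymp_equiv (series_sum A) (series_mult (series_sum B) V)"
  proof (rule asymp_equiv_ratio_coneI[OF assms(1)])
    show "supp (series_sum A) \<subseteq> ratio_cone \<mu> ?p"
      using geom_conv_series_sum(1)[OF assms(1) geom_A] by (simp add: lead(1))
    show "supp (series_mult (series_sum B) V) \<subseteq> ratio_cone \<mu> ?p"
      using geom_conv_series_sum(1)[OF assms(1,3)] supp_V by (rule supp_series_mult_ratio_cone)
    have "series_sum A ?p = B 0 (mag (B 0)) * V (mag V)"
      using geom_conv_series_sum(2)[OF assms(1) geom_A] lead[of 0] by simp
    moreover have "series_mult (series_sum B) V ?p = B 0 (mag (B 0)) * V (mag V)"
      using series_mult_at_ratio_cone[OF assms(1) geom_conv_series_sum(1)[OF assms(1,3)] supp_V]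
        geom_conv_series_sum(2)[OF assms(1,3)] by simp
    ultimately show "series_sum A ?p \<noteq> 0" and "series_mult (series_sum B) V ?p = series_sum A ?p"
      using witnesses_mag[OF assms(1) wB] witnesses_mag[OF assms(1,2)] by simp_all
  qed
qed

end
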